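(* Consider the FlexPD-C iterates described in the context with $\beta>0$, integer $T\ge1$ and $0<\alpha<1/\rho(B)$, and let $C=\sum_{t=0}^{T-1}(I-\alpha B)^t$, $M=C^{-1}(I-\alpha B)^T$, $N=\frac{1}{\alpha}(C^{-1}-M)$. Then for any $\tilde d,\tilde g,\tilde e>1$ and every $k\ge0$, \[\|\lambda^{k+1}-\lambda^*\|^2\le\frac{\tilde d}{\alpha^2 s(AA')}\Big(\frac{\tilde e}{\tilde e-1}\rho(M)^2+\tilde e\alpha^2L^2\Big)\|x^k-x^{k+1}\|^2+\frac{\tilde d}{(\tilde d-1)\alpha^2 s(AA')}\Big(\frac{\tilde g}{\tilde g-1}\alpha^2\rho\big((\beta A'A-N)^2\big)+\tilde g\alpha^2L^2\Big)\|x^{k+1}-x^*\|^2,\] where $s(AA')$ is the smallest nonzero eigenvalue of $AA'$.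
   Context: Setting: $n$ agents are connected by a connected undirected graph with edge set $\mathcal E$, $\epsilon=|\mathcal E|$. For $x\in\mathbb R^n$ let $f(x)=\sum_{i=1}^n f_i(x_i)$, where each $f_i:\mathbb R\to\mathbb R$ is twice differentiable with $m\le f_i''\le L$ for constants $0<m\le L$; $\nabla f(x)=(f_1'(x_1),\dots,f_n'(x_n))'$. $A\in\mathbb R^{\epsilon\times n}$ is the edge–node incidence matrix (null space spanned by the all-ones vector). $B\in\mathbb R^{n\times n}$ is symmetric positive semidefinite with the same null space as $A$, off-diagonal entries nonzero only on edges. $x^*$ is the unique minimizer of $f$ subject to $Ax=0$ and $\lambda^*$ a Lagrange multiplier with $\nabla f(x^* )+A'\lambda^*=0$, $Ax^*=0$, $Bx^*=0$, chosen in the column space of $A$ (orthogonal to the null space of $A'$). FlexPD-C: given $\alpha,\beta>0$, $T\ge1$, $x^0$ arbitrary, $\lambda^0=0$; for $k\ge0$: $x^{k+1,0}=x^k$; for $t=1,\dots,T$, $x^{k+1,t}=x^{k+1,t-1}-\alpha\nabla f(x^k)-\alpha A'\lambda^k-\alpha Bx^{k+1,t-1}$; then $x^{k+1}=x^{k+1,T}$, $\lambda^{k+1}=\lambda^k+\beta Ax^{k+1}$. Notation: $\rho(S)$ largest eigenvalue of a symmetric matrix $S$; $\|\cdot\|$ Euclidean norm. *)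

theory Defs
  imports "HOL-Analysis.Analysis"
begin

text \<open>Matrix power with respect to the matrix product (note: the ring structure of
  vec is componentwise, so the power operator would not be the matrix power).\<close>
fun matpow :: "real^'n^'n \<Rightarrow> nat \<Rightarrow> real^'n^'n" where
  "matpow S 0 = mat 1"
| "matpow S (Suc t) = S ** matpow S t"

definition eigvals :: "real^'n^'n \<Rightarrow> real set" where
  "eigvals S = {\<mu>. \<exists>v. v \<noteq> 0 \<and> S *v v = \<mu> *\<^sub>R v}"

definition rho :: "real^'n^'n \<Rightarrow> real" where
  "rho S = Max (eigvals S)"

definition smin_nz :: "real^'n^'n \<Rightarrow> real" where
  "smin_nz S = Min (eigvals S - {0})"

definition incidence :: "('e \<Rightarrow> 'n \<times> 'n) \<Rightarrow> real^'n^'e" where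
  "incidence ends = (\<chi> e i. if i = fst (ends e) then 1 else if i = snd (ends e) then -1 else 0)"

definition adj :: "('e \<Rightarrow> 'n \<times> 'n) \<Rightarrow> 'n \<Rightarrow> 'n \<Rightarrow> bool" where
  "adj ends i j \<longleftrightarrow> (\<exists>e. ends e = (i, j) \<or> ends e = (j, i))"

definition simple_connected_graph :: "('e \<Rightarrow> 'n \<times> 'n) \<Rightarrow> bool" where
  "simple_connected_graph ends \<longleftrightarrow>
     (\<forall>e. fst (ends e) \<noteq> snd (ends e)) \<and>
     (\<forall>e e'. {fst (ends e), snd (ends e)} = {fst (ends e'), snd (ends e')} \<longrightarrow> e = e') \<and>
     (\<forall>i j. (adj ends)\<^sup>*\<^sup>* i j)"

definition gradf :: "('n \<Rightarrow> real \<Rightarrow> real) \<Rightarrow> real^'n \<Rightarrow> real^'n" where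
  "gradf fd x = (\<chi> i. fd i (x $ i))"

definition fsum :: "('n::finite \<Rightarrow> real \<Rightarrow> real) \<Rightarrow> real^'n \<Rightarrow> real" where
  "fsum f x = (\<Sum>i\<in>UNIV. f i (x $ i))"

definition inner_step :: "real \<Rightarrow> real^'n^'e \<Rightarrow> real^'n^'n \<Rightarrow> real^'n \<Rightarrow> real^'e \<Rightarrow> real^'n \<Rightarrow> real^'n" where
  "inner_step \<alpha> A B g l z = z - \<alpha> *\<^sub>R g - \<alpha> *\<^sub>R (transpose A *v l) - \<alpha> *\<^sub>R (B *v z)"

end

theory Submission
  imports Defs
begin

text \<open>
  Unrolling the T inner steps gives C^-1 x(k+1) = M x(k) - alpha (grad f(x(k)) + A' lambda(k)).
  Here C is a sum of powers of W = I - alpha B, which is symmetric positive semidefinite because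
  alpha < 1/rho(B); so C is positive definite, and M = C^-1 W^T is symmetric positive semidefinite,
  whence |M z| <= rho(M) |z|. Combined with the multiplier update, the optimality condition
  grad f(x*) + A' lambda* = 0 and (beta A'A - N) x* = 0 (from W x* = x*), this yields the identity

    alpha A' (lambda(k+1) - lambda*)
      = [M (x(k) - x(k+1)) - alpha (grad f(x(k)) - grad f(x(k+1)))]
        + [alpha (beta A'A - N) (x(k+1) - x*) - alpha (grad f(x(k+1)) - grad f(x*))].

  As lambda(k+1) - lambda* lies in the range of A, the squared norm of the left side is at least
  alpha^2 s(AA') |lambda(k+1) - lambda*|^2. The right side is estimated by splitting three times
  with |u + v|^2 <= d/(d-1) |u|^2 + d |v|^2, by the L-Lipschitz continuity of the gradient, and by
  |D z|^2 <= rho(D^2) |z|^2 for the symmetric matrix D = beta A'A - N.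
\<close>

lemma inner_matrix_vector_transpose:
  fixes A :: "real^'n^'m"
  shows "(A *v x) \<bullet> y = x \<bullet> (transpose A *v y)"
  by (metis dot_lmul_matrix inner_commute transpose_matrix_vector)

lemma symmetric_matrix_inner:
  fixes S :: "real^'n^'n"
  assumes "transpose S = S"
  shows "(S *v x) \<bullet> y = x \<bullet> (S *v y)"
  by (metis assms inner_matrix_vector_transpose)

lemma transpose_diff: "transpose (A - B) = transpose A - transpose (B :: 'a::ring_1^'n^'m)"
  by (simp add: transpose_def vec_eq_iff)

lemma transpose_sum: "transpose (\<Sum>i\<in>I. F i) = (\<Sum>i\<in>I. transpose (F i :: 'a::semiring_1^'n^'m))"
  by (simp add: transpose_def vec_eq_iff sum_component)

lemma matrix_add_rdistrib: "(A + B) ** C = A ** C + B ** (C :: 'a::semiring_1^'k^'n)"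
  by (simp add: matrix_matrix_mult_def vec_eq_iff distrib_right sum.distrib)

lemma sum_matrix_mult: "(\<Sum>i\<in>I. F i) ** X = (\<Sum>i\<in>I. F i ** (X :: 'a::semiring_1^'k^'n))"
  by (induction I rule: infinite_finite_induct) (simp_all add: matrix_add_rdistrib)

lemma matrix_mult_sum: "X ** (\<Sum>i\<in>I. F i) = (\<Sum>i\<in>I. (X :: 'a::semiring_1^'n^'m) ** F i)"
  by (induction I rule: infinite_finite_induct) (simp_all add: matrix_add_ldistrib)

lemma sum_matrix_vector_mult: "(\<Sum>t\<in>I. F t) *v x = (\<Sum>t\<in>I. F t *v x)"
  by (induction I rule: infinite_finite_induct) (simp_all add: matrix_vector_mult_add_rdistrib)

lemma invertible_if_pos_def:
  fixes C :: "real^'n^'n"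
  assumes "\<And>x. x \<noteq> 0 \<Longrightarrow> 0 < x \<bullet> (C *v x)"
  shows "invertible C"
proof -
  have "x = 0" if "C *v x = 0" for x
    using assms[of x] that by (cases "x = 0") auto
  then show ?thesis by (auto simp: invertible_left_inverse matrix_left_invertible_ker)
qed

lemma matrix_inv_left:
  assumes "invertible A"
  shows "matrix_inv A ** A = mat 1"
  using assms unfolding invertible_def matrix_inv_def by (rule someI2_ex) blast

lemma matrix_inv_right:
  assumes "invertible A"
  shows "A ** matrix_inv A = mat 1"
  using assms unfolding invertible_def matrix_inv_def by (rule someI2_ex) blast

lemma transpose_matrix_inv_symmetric:
  fixes C :: "real^'n^'n"
  assumes sym: "transpose C = C" and inv: "invertible C"
  shows "transpose (matrix_inv C) = matrix_inv C"
proof -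
  have "transpose (matrix_inv C) ** C = mat 1"
    using matrix_transpose_mul[of C "matrix_inv C"] matrix_inv_right[OF inv] sym by simp
  then have "transpose (matrix_inv C) = transpose (matrix_inv C) ** (C ** matrix_inv C)"
    using matrix_inv_right[OF inv] by simp
  also have "\<dots> = matrix_inv C"
    by (simp add: matrix_mul_assoc \<open>transpose (matrix_inv C) ** C = mat 1\<close>)
  finally show ?thesis .
qed

lemma matrix_inv_commute:
  fixes C P :: "real^'n^'n"
  assumes inv: "invertible C" and comm: "C ** P = P ** C"
  shows "matrix_inv C ** P = P ** matrix_inv C"
proof -
  have "matrix_inv C ** P = matrix_inv C ** (P ** C) ** matrix_inv C"
    by (simp add: matrix_mul_assoc[symmetric] matrix_inv_right[OF inv])
  also have "\<dots> = P ** matrix_inv C"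
    by (simp add: comm[symmetric] matrix_mul_assoc matrix_inv_left[OF inv])
  finally show ?thesis .
qed

lemma matpow_add: "matpow W (a + b) = matpow W a ** matpow W b"
  by (induction a) (simp_all add: matrix_mul_assoc)

lemma matpow_mult_commute: "matpow W a ** matpow W b = matpow W b ** matpow W a"
  by (metis matpow_add add.commute)

lemma matpow_commute: "matpow W t ** W = W ** matpow W t"
  using matpow_add[of W t 1] by simp

lemma transpose_matpow:
  assumes "transpose W = W"
  shows "transpose (matpow W t) = matpow W t"
  by (induction t) (simp_all add: assms matrix_transpose_mul matpow_commute)

lemma matpow_psd:
  fixes W :: "real^'n^'n"
  assumes sym: "transpose W = W" and psd: "\<And>v. 0 \<le> v \<bullet> (W *v v)"
  shows "0 \<le> v \<bullet> (matpow W t *v v)"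
proof -
  \<comment> \<open>According to the parity of \<open>t\<close>, \<open>W\<^sup>t = W\<^sup>s X W\<^sup>s\<close> with \<open>X = 1\<close> or \<open>X = W\<close>.\<close>
  have sandwich: "v \<bullet> ((matpow W s ** X ** matpow W s) *v v)
      = (matpow W s *v v) \<bullet> (X *v (matpow W s *v v))" for s X
    by (simp add: matrix_vector_mul_assoc[symmetric]
        symmetric_matrix_inner[OF transpose_matpow[OF sym], symmetric])
  define s where "s = t div 2"
  have "t = s + s \<or> t = s + Suc s" unfolding s_def by presburger
  then show ?thesis
  proof
    assume t: "t = s + s"
    have "matpow W t = matpow W s ** mat 1 ** matpow W s"
      unfolding t matpow_add by simp
    then show ?thesis using sandwich[of s "mat 1"] by simp
  next
    assume t: "t = s + Suc s"
    have "matpow W t = matpow W s ** W ** matpow W s"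
      unfolding t matpow_add by (simp add: matrix_mul_assoc)
    then show ?thesis using sandwich[of s W] psd by simp
  qed
qed

lemma matpow_fixed:
  assumes "W *v z = z"
  shows "matpow W t *v z = z"
  by (induction t) (simp_all add: assms matrix_vector_mul_assoc[symmetric])

section \<open>Rayleigh quotients and eigenvalues of symmetric matrices\<close>

lemma linear_coeff_eq_0_if_quadratic_nonneg:
  fixes a b :: real
  assumes nonneg: "\<And>t. 0 \<le> b * t + a * t\<^sup>2"
  shows "b = 0"
proof -
  define \<epsilon> where "\<epsilon> = 1 / (\<bar>a\<bar> + 1)"
  have "0 < \<epsilon>" by (simp add: \<epsilon>_def add_pos_nonneg)
  moreover have "a * \<epsilon> < 1"
    by (simp add: \<epsilon>_def add_pos_nonneg pos_divide_less_eq)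
  ultimately have neg: "\<epsilon> * (a * \<epsilon> - 1) < 0"
    by (simp add: mult_pos_neg)
  have "0 \<le> b * (- b * \<epsilon>) + a * (- b * \<epsilon>)\<^sup>2" by (rule nonneg)
  also have "\<dots> = b\<^sup>2 * (\<epsilon> * (a * \<epsilon> - 1))" by (simp add: power2_eq_square algebra_simps)
  finally have "b\<^sup>2 \<le> 0"
    using neg by (meson mult_pos_neg not_le)
  then show ?thesis by simp
qed

lemma rayleigh_min_on_subspace:
  fixes s :: "'a::euclidean_space \<Rightarrow> 'a"
  assumes lin: "linear s" and sub: "subspace V" and nontriv: "V \<noteq> {0}"
  shows "\<exists>u\<in>V. norm u = 1 \<and> (\<forall>y\<in>V. (u \<bullet> s u) * (y \<bullet> y) \<le> y \<bullet> s y)"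
proof -
  let ?K = "V \<inter> sphere 0 1"
  have compact: "compact ?K"
    using closed_subspace[OF sub] compact_sphere by (metis Int_commute compact_Int_closed)
  obtain v where v: "v \<in> V" "v \<noteq> 0"
    using nontriv subspace_0[OF sub] by blast
  then have "(1 / norm v) *\<^sub>R v \<in> ?K"
    using sub by (simp add: subspace_scale)
  then have nonempty: "?K \<noteq> {}" by blast
  have cont: "continuous_on ?K (\<lambda>y. y \<bullet> s y)"
  proof -
    have "bounded_linear s" using lin linear_conv_bounded_linear by blast
    then show ?thesis by (intro continuous_intros linear_continuous_on)
  qed
  obtain u where u: "u \<in> ?K" and umin: "\<And>y. y \<in> ?K \<Longrightarrow> u \<bullet> s u \<le> y \<bullet> s y"
    using continuous_attains_inf[OF compact nonempty cont] by blast
  have "(u \<bullet> s u) * (y \<bullet> y) \<le> y \<bullet> s y" if "y \<in> V" for y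
  proof (cases "y = 0")
    case True
    then show ?thesis by (simp add: linear_0[OF lin])
  next
    case False
    define c where "c = 1 / norm y"
    have "c *\<^sub>R y \<in> ?K"
      using False \<open>y \<in> V\<close> sub by (simp add: c_def subspace_scale)
    then have "u \<bullet> s u \<le> (c *\<^sub>R y) \<bullet> s (c *\<^sub>R y)" by (rule umin)
    then have "u \<bullet> s u \<le> c\<^sup>2 * (y \<bullet> s y)"
      by (simp add: linear_scale[OF lin] power2_eq_square)
    then have "(u \<bullet> s u) * (norm y)\<^sup>2 \<le> (c\<^sup>2 * (y \<bullet> s y)) * (norm y)\<^sup>2"
      by (rule mult_right_mono) simp
    also have "\<dots> = (c * norm y)\<^sup>2 * (y \<bullet> s y)"
      by (simp add: power_mult_distrib)
    also have "(c * norm y)\<^sup>2 = 1"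
      using False by (simp add: c_def)
    finally show ?thesis
      by (simp add: dot_square_norm)
  qed
  then show ?thesis
    using u by auto
qed

lemma rayleigh_minimizer_is_eigenvector:
  fixes s :: "'a::real_inner \<Rightarrow> 'a"
  assumes lin: "linear s" and sym: "\<And>x y. s x \<bullet> y = x \<bullet> s y"
    and sub: "subspace V" and inv: "\<And>v. v \<in> V \<Longrightarrow> s v \<in> V"
    and u: "u \<in> V" and lower: "\<And>y. y \<in> V \<Longrightarrow> \<mu> * (y \<bullet> y) \<le> y \<bullet> s y"
    and attained: "u \<bullet> s u = \<mu> * (u \<bullet> u)"
  shows "s u = \<mu> *\<^sub>R u"
proof -
  define r where "r = s u - \<mu> *\<^sub>R u"
  have r: "r \<in> V" using inv u sub by (simp add: r_def subspace_diff subspace_scale)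
  \<comment> \<open>The form \<open>y \<bullet> s y - \<mu> * (y \<bullet> y)\<close> is nonnegative on \<open>V\<close> and vanishes at \<open>u\<close>,
      so its derivative at \<open>u\<close> in the direction \<open>r\<close>, namely \<open>2 * (r \<bullet> r)\<close>, vanishes.\<close>
  have "0 \<le> (2 * (r \<bullet> r)) * t + (r \<bullet> s r - \<mu> * (r \<bullet> r)) * t\<^sup>2" for t
  proof -
    have "u + t *\<^sub>R r \<in> V" using u r sub by (simp add: subspace_add subspace_scale)
    then have "\<mu> * ((u + t *\<^sub>R r) \<bullet> (u + t *\<^sub>R r)) \<le> (u + t *\<^sub>R r) \<bullet> s (u + t *\<^sub>R r)"
      by (rule lower)
    then have "0 \<le> (u + t *\<^sub>R r) \<bullet> s (u + t *\<^sub>R r) - \<mu> * ((u + t *\<^sub>R r) \<bullet> (u + t *\<^sub>R r))"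
      by simp
    also have "\<dots> = (u \<bullet> s u - \<mu> * (u \<bullet> u)) + (2 * (r \<bullet> (s u - \<mu> *\<^sub>R u))) * t
        + (r \<bullet> s r - \<mu> * (r \<bullet> r)) * t\<^sup>2"
    proof -
      have "s (u + t *\<^sub>R r) = s u + t *\<^sub>R s r"
        by (simp add: linear_add[OF lin] linear_scale[OF lin])
      moreover have "u \<bullet> s r = r \<bullet> s u"
        using sym[of r u] by (simp add: inner_commute)
      ultimately show ?thesis
        by (simp add: inner_add_left inner_add_right inner_diff_right inner_commute[of u r]
            power2_eq_square algebra_simps)
    qed
    also have "\<dots> = (2 * (r \<bullet> r)) * t + (r \<bullet> s r - \<mu> * (r \<bullet> r)) * t\<^sup>2"
      using attained by (simp add: r_def[symmetric])
    finally show ?thesis .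
  qed
  then have "2 * (r \<bullet> r) = 0" by (rule linear_coeff_eq_0_if_quadratic_nonneg)
  then show ?thesis by (simp add: r_def)
qed

lemma self_adjoint_min_eigenpair:
  fixes s :: "'a::euclidean_space \<Rightarrow> 'a"
  assumes lin: "linear s" and sym: "\<And>x y. s x \<bullet> y = x \<bullet> s y"
    and sub: "subspace V" and inv: "\<And>v. v \<in> V \<Longrightarrow> s v \<in> V" and nontriv: "V \<noteq> {0}"
  obtains u \<mu> where "u \<in> V" "u \<noteq> 0" "s u = \<mu> *\<^sub>R u"
    and "\<And>y. y \<in> V \<Longrightarrow> \<mu> * (y \<bullet> y) \<le> y \<bullet> s y"
proof -
  obtain u where u: "u \<in> V" "norm u = 1"
    and lower: "\<And>y. y \<in> V \<Longrightarrow> (u \<bullet> s u) * (y \<bullet> y) \<le> y \<bullet> s y"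
    using rayleigh_min_on_subspace[OF lin sub nontriv] by blast
  have "u \<bullet> s u = (u \<bullet> s u) * (u \<bullet> u)"
    using u by (simp add: dot_square_norm)
  then have "s u = (u \<bullet> s u) *\<^sub>R u"
    using rayleigh_minimizer_is_eigenvector[OF lin sym sub inv u(1) lower] by blast
  moreover have "u \<noteq> 0" using u by auto
  ultimately show ?thesis using that u lower by blast
qed

lemma finite_eigvals:
  fixes S :: "real^'n^'n"
  assumes sym: "transpose S = S"
  shows "finite (eigvals S)"
proof -
  define ev where "ev \<mu> = (SOME v. v \<noteq> 0 \<and> S *v v = \<mu> *\<^sub>R v)" for \<mu>
  have ev: "ev \<mu> \<noteq> 0 \<and> S *v ev \<mu> = \<mu> *\<^sub>R ev \<mu>" if "\<mu> \<in> eigvals S" for \<mu>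
    using that unfolding eigvals_def ev_def by (metis (mono_tags, lifting) mem_Collect_eq someI_ex)
  have orth: "ev \<mu> \<bullet> ev \<nu> = 0" if "\<mu> \<in> eigvals S" "\<nu> \<in> eigvals S" "\<mu> \<noteq> \<nu>" for \<mu> \<nu>
  proof -
    have "\<mu> * (ev \<mu> \<bullet> ev \<nu>) = (S *v ev \<mu>) \<bullet> ev \<nu>" using ev[OF that(1)] by simp
    also have "\<dots> = ev \<mu> \<bullet> (S *v ev \<nu>)" by (rule symmetric_matrix_inner[OF sym])
    also have "\<dots> = \<nu> * (ev \<mu> \<bullet> ev \<nu>)" using ev[OF that(2)] by simp
    finally show ?thesis using that(3) by simp
  qed
  have "inj_on ev (eigvals S)"
    by (rule inj_onI) (metis ev orth inner_eq_zero_iff)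
  moreover have "independent (ev ` eigvals S)"
  proof (rule pairwise_orthogonal_independent)
    show "pairwise orthogonal (ev ` eigvals S)"
      unfolding pairwise_def orthogonal_def using orth by (metis imageE)
    show "0 \<notin> ev ` eigvals S" using ev by auto
  qed
  then have "finite (ev ` eigvals S)" using independent_bound by blast
  ultimately show ?thesis using finite_imageD by blast
qed

lemma symmetric_max_eigenpair:
  fixes S :: "real^'n^'n"
  assumes sym: "transpose S = S"
  obtains \<mu> where "\<mu> \<in> eigvals S" "\<And>x. x \<bullet> (S *v x) \<le> \<mu> * (x \<bullet> x)"
proof -
  have "linear (\<lambda>x. - (S *v x))" by (simp add: linear_compose_neg)
  moreover have "(- (S *v x)) \<bullet> y = x \<bullet> (- (S *v y))" for x y
    using symmetric_matrix_inner[OF sym] by simp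
  ultimately obtain u \<mu> where u: "u \<noteq> 0" "- (S *v u) = \<mu> *\<^sub>R u"
    and lower: "\<And>y. \<mu> * (y \<bullet> y) \<le> y \<bullet> - (S *v y)"
    using self_adjoint_min_eigenpair[of "\<lambda>x. - (S *v x)" UNIV] UNIV_not_singleton[of 0]
    by (metis UNIV_I subspace_UNIV)
  have "S *v u = (- \<mu>) *\<^sub>R u" using u(2) by (metis minus_minus scaleR_minus_left)
  then have "- \<mu> \<in> eigvals S" using u by (auto simp: eigvals_def)
  moreover have "x \<bullet> (S *v x) \<le> - \<mu> * (x \<bullet> x)" for x
    using lower[of x] by simp
  ultimately show ?thesis by (rule that)
qed

lemma rho_eq_max_eigenvalue:
  fixes S :: "real^'n^'n"
  assumes sym: "transpose S = S" and \<mu>: "\<mu> \<in> eigvals S"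
    and upper: "\<And>x. x \<bullet> (S *v x) \<le> \<mu> * (x \<bullet> x)"
  shows "rho S = \<mu>"
  unfolding rho_def
proof (rule Max_eqI[OF finite_eigvals[OF sym] _ \<mu>])
  fix \<nu> assume "\<nu> \<in> eigvals S"
  then obtain v where v: "v \<noteq> 0" "S *v v = \<nu> *\<^sub>R v" by (auto simp: eigvals_def)
  then have "\<nu> * (v \<bullet> v) \<le> \<mu> * (v \<bullet> v)" using upper[of v] by simp
  then show "\<nu> \<le> \<mu>" using v by simp
qed

lemma rho_in_eigvals:
  fixes S :: "real^'n^'n"
  assumes "transpose S = S"
  shows "rho S \<in> eigvals S"
  by (metis assms rho_eq_max_eigenvalue symmetric_max_eigenpair)

lemma inner_le_rho:
  fixes S :: "real^'n^'n"
  assumes "transpose S = S"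
  shows "x \<bullet> (S *v x) \<le> rho S * (x \<bullet> x)"
  by (metis assms rho_eq_max_eigenvalue symmetric_max_eigenpair)

lemma eigval_le_rho:
  fixes S :: "real^'n^'n"
  assumes "transpose S = S" "\<nu> \<in> eigvals S"
  shows "\<nu> \<le> rho S"
  unfolding rho_def by (rule Max_ge[OF finite_eigvals assms(2)]) (rule assms(1))

lemma rho_nonneg:
  fixes S :: "real^'n^'n"
  assumes sym: "transpose S = S" and psd: "\<And>v. 0 \<le> v \<bullet> (S *v v)"
  shows "0 \<le> rho S"
proof -
  obtain v where v: "v \<noteq> 0" "S *v v = rho S *\<^sub>R v"
    using rho_in_eigvals[OF sym] by (auto simp: eigvals_def)
  then have "0 \<le> rho S * (v \<bullet> v)" using psd[of v] by simp
  then show ?thesis using v by (metis inner_gt_zero_iff zero_le_mult_iff not_le)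
qed

lemma inner_matrix_square:
  fixes S :: "real^'n^'n"
  assumes sym: "transpose S = S"
  shows "x \<bullet> ((S ** S) *v x) = (norm (S *v x))\<^sup>2"
  by (simp add: symmetric_matrix_inner[OF sym] matrix_vector_mul_assoc[symmetric]
      power2_norm_eq_inner)

lemma norm_matrix_vector_sq_le:
  fixes S :: "real^'n^'n"
  assumes sym: "transpose S = S"
  shows "(norm (S *v x))\<^sup>2 \<le> rho (S ** S) * (norm x)\<^sup>2"
proof -
  have "transpose (S ** S) = S ** S" by (simp add: matrix_transpose_mul sym)
  then have "x \<bullet> ((S ** S) *v x) \<le> rho (S ** S) * (x \<bullet> x)" by (rule inner_le_rho)
  then show ?thesis by (simp add: inner_matrix_square[OF sym] dot_square_norm)
qed

lemma rho_square_le: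
  fixes S :: "real^'n^'n"
  assumes sym: "transpose S = S" and psd: "\<And>v. 0 \<le> v \<bullet> (S *v v)"
  shows "rho (S ** S) \<le> (rho S)\<^sup>2"
proof -
  have sym2: "transpose (S ** S) = S ** S" by (simp add: matrix_transpose_mul sym)
  obtain v where v: "v \<noteq> 0" "(S ** S) *v v = rho (S ** S) *\<^sub>R v"
    using rho_in_eigvals[OF sym2] by (auto simp: eigvals_def)
  have "0 \<le> rho (S ** S)"
    by (rule rho_nonneg[OF sym2]) (simp add: inner_matrix_square[OF sym])
  define r where "r = sqrt (rho (S ** S))"
  have r: "0 \<le> r" "r * r = rho (S ** S)"
    using \<open>0 \<le> rho (S ** S)\<close> by (simp_all add: r_def)
  \<comment> \<open>\<open>S\<^sup>2 v = r\<^sup>2 v\<close> factors as \<open>(S - r) (S + r) v = 0\<close>.\<close>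
  define w where "w = S *v v + r *\<^sub>R v"
  have "S *v w = (S ** S) *v v + r *\<^sub>R (S *v v)"
    by (simp add: w_def matrix_vector_right_distrib matrix_vector_mult_scaleR
        matrix_vector_mul_assoc)
  also have "\<dots> = r *\<^sub>R w"
    using v(2) r(2) by (simp add: w_def scaleR_add_right add.commute)
  finally have Sw: "S *v w = r *\<^sub>R w" .
  have "r \<le> rho S"
  proof (cases "w = 0")
    case False
    then show ?thesis using Sw by (intro eigval_le_rho[OF sym]) (auto simp: eigvals_def)
  next
    case True
    then have "S *v v = - r *\<^sub>R v" by (simp add: w_def eq_neg_iff_add_eq_0)
    then have "0 \<le> - r * (v \<bullet> v)" using psd[of v] by simp
    moreover have "0 < v \<bullet> v" using v by simp
    ultimately have "r \<le> 0" by (simp add: zero_le_mult_iff mult_le_0_iff)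
    then show ?thesis using r rho_nonneg[OF sym psd] by simp
  qed
  then have "r * r \<le> rho S * rho S"
    using r(1) by (intro mult_mono) auto
  then show ?thesis using r(2) by (simp add: power2_eq_square)
qed

lemma norm_matrix_vector_sq_le_psd:
  fixes S :: "real^'n^'n"
  assumes sym: "transpose S = S" and psd: "\<And>v. 0 \<le> v \<bullet> (S *v v)"
  shows "(norm (S *v x))\<^sup>2 \<le> (rho S)\<^sup>2 * (norm x)\<^sup>2"
proof -
  have "rho (S ** S) * (norm x)\<^sup>2 \<le> (rho S)\<^sup>2 * (norm x)\<^sup>2"
    by (rule mult_right_mono[OF rho_square_le[OF sym psd]]) simp
  with norm_matrix_vector_sq_le[OF sym, of x] show ?thesis by linarith
qed

lemma smin_nz_gram:
  fixes A :: "real^'n^'m"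
  assumes "A \<noteq> 0"
  shows "0 < smin_nz (A ** transpose A)"
    and "smin_nz (A ** transpose A) * (norm (A *v w))\<^sup>2 \<le> (norm (transpose A *v (A *v w)))\<^sup>2"
proof -
  define S where "S = A ** transpose A"
  have sym: "transpose S = S" by (simp add: S_def matrix_transpose_mul)
  have quad: "y \<bullet> (S *v y) = (norm (transpose A *v y))\<^sup>2" for y
    by (simp add: S_def matrix_vector_mul_assoc[symmetric] inner_matrix_vector_transpose
        power2_norm_eq_inner del: transpose_matrix_vector)
  define V where "V = range (\<lambda>w. A *v w)"
  have sub: "subspace V" unfolding V_def
    by (rule linear_subspace_image[OF matrix_vector_mul_linear subspace_UNIV])
  have inv: "S *v v \<in> V" if "v \<in> V" for v
  proof -
    have "S *v v = A *v (transpose A *v v)"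
      by (simp add: S_def matrix_vector_mul_assoc del: transpose_matrix_vector)
    then show ?thesis by (simp add: V_def)
  qed
  obtain w0 where "A *v w0 \<noteq> 0"
    using assms by (metis matrix_eq matrix_vector_mult_0)
  then have "V \<noteq> {0}" by (auto simp: V_def)
  then obtain u \<mu> where u: "u \<in> V" "u \<noteq> 0" "S *v u = \<mu> *\<^sub>R u"
    and lower: "\<And>y. y \<in> V \<Longrightarrow> \<mu> * (y \<bullet> y) \<le> y \<bullet> (S *v y)"
    using self_adjoint_min_eigenpair[of "\<lambda>x. S *v x" V, OF matrix_vector_mul_linear
        symmetric_matrix_inner[OF sym] sub inv] by blast
  \<comment> \<open>On the range of \<open>A\<close> the map \<open>transpose A\<close> is injective, so \<open>\<mu> \<noteq> 0\<close>.\<close>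
  have "\<mu> \<noteq> 0"
  proof
    assume "\<mu> = 0"
    then have "transpose A *v u = 0" using quad[of u] u(3) by simp
    moreover obtain w where "u = A *v w" using u(1) V_def by blast
    ultimately have "u \<bullet> u = 0"
      by (simp add: inner_matrix_vector_transpose del: transpose_matrix_vector)
    then show False using u(2) by simp
  qed
  then have \<mu>: "\<mu> \<in> eigvals S - {0}" using u by (auto simp: eigvals_def)
  have pos: "0 < \<nu>" if "\<nu> \<in> eigvals S - {0}" for \<nu>
  proof -
    have "\<nu> \<in> eigvals S" using that by simp
    then obtain v where v: "v \<noteq> 0" "S *v v = \<nu> *\<^sub>R v" by (auto simp: eigvals_def)
    then have "0 \<le> \<nu> * (v \<bullet> v)" using quad[of v] by simp
    moreover have "0 < v \<bullet> v" using v by simp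
    ultimately have "0 \<le> \<nu>" by (simp add: zero_le_mult_iff)
    then show ?thesis using that by auto
  qed
  have fin: "finite (eigvals S - {0})" using finite_eigvals[OF sym] by simp
  have "smin_nz S \<in> eigvals S - {0}"
    unfolding smin_nz_def using fin \<mu> by (intro Min_in) auto
  then have "0 < smin_nz S" by (rule pos)
  then show "0 < smin_nz (A ** transpose A)" by (simp only: S_def)
  have "smin_nz S \<le> \<mu>" unfolding smin_nz_def using Min_le[OF fin \<mu>] .
  moreover have "0 \<le> (norm (A *v w))\<^sup>2" by simp
  ultimately have "smin_nz S * (norm (A *v w))\<^sup>2 \<le> \<mu> * (norm (A *v w))\<^sup>2"
    by (rule mult_right_mono)
  also have "\<dots> \<le> (norm (transpose A *v (A *v w)))\<^sup>2"
  proof -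
    have "A *v w \<in> V" by (simp add: V_def)
    then have "\<mu> * ((A *v w) \<bullet> (A *v w)) \<le> (A *v w) \<bullet> (S *v (A *v w))" by (rule lower)
    then show ?thesis by (simp only: quad dot_square_norm)
  qed
  finally show "smin_nz (A ** transpose A) * (norm (A *v w))\<^sup>2 \<le> (norm (transpose A *v (A *v w)))\<^sup>2"
    by (simp add: S_def)
qed

lemma norm_vec_sq: "(norm x)\<^sup>2 = (\<Sum>i\<in>UNIV. (x $ i)\<^sup>2)" for x :: "real^'n"
  by (simp add: norm_vec_def L2_set_def sum_nonneg)

lemma gradf_lipschitz_sq:
  assumes deriv: "\<And>i t. (fd i has_real_derivative fdd i t) (at t)"
    and bound: "\<And>i t. \<bar>fdd i t\<bar> \<le> L"
  shows "(norm (gradf fd x - gradf fd y))\<^sup>2 \<le> L\<^sup>2 * (norm (x - y))\<^sup>2"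
proof -
  have "(fd i (x $ i) - fd i (y $ i))\<^sup>2 \<le> L\<^sup>2 * (x $ i - y $ i)\<^sup>2" for i
  proof -
    have "\<bar>fd i (x $ i) - fd i (y $ i)\<bar> \<le> L * \<bar>x $ i - y $ i\<bar>"
      using field_differentiable_bound[of UNIV "fd i" "fdd i" L "x $ i" "y $ i"] deriv bound
      by auto
    then have "\<bar>fd i (x $ i) - fd i (y $ i)\<bar>\<^sup>2 \<le> (L * \<bar>x $ i - y $ i\<bar>)\<^sup>2"
      by (rule power_mono) simp
    then show ?thesis by (simp add: power_mult_distrib)
  qed
  then have "(\<Sum>i\<in>UNIV. (fd i (x $ i) - fd i (y $ i))\<^sup>2) \<le> (\<Sum>i\<in>UNIV. L\<^sup>2 * (x $ i - y $ i)\<^sup>2)"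
    by (rule sum_mono)
  then show ?thesis
    by (simp add: norm_vec_sq gradf_def sum_distrib_left)
qed

lemma norm_add_sq_le:
  fixes a b :: "'a::real_normed_vector"
  assumes d: "1 < d"
  shows "(norm (a + b))\<^sup>2 \<le> d / (d - 1) * (norm a)\<^sup>2 + d * (norm b)\<^sup>2"
proof -
  define x y where "x = norm a" and "y = norm b"
  have "(norm (a + b))\<^sup>2 \<le> (x + y)\<^sup>2"
    unfolding x_def y_def by (rule power_mono[OF norm_triangle_ineq]) simp
  also have "\<dots> \<le> d / (d - 1) * x\<^sup>2 + d * y\<^sup>2"
  proof -
    have "0 \<le> (x - (d - 1) * y)\<^sup>2" by simp
    then have "(d - 1) * (x + y)\<^sup>2 \<le> d * x\<^sup>2 + (d - 1) * (d * y\<^sup>2)"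
      by (simp add: power2_eq_square algebra_simps)
    then show ?thesis using d by (simp add: field_simps)
  qed
  finally show ?thesis by (simp add: x_def y_def)
qed

lemma norm_diff_sq_le:
  fixes a b :: "'a::real_normed_vector"
  assumes e: "1 < e" and "(norm a)\<^sup>2 \<le> P * X" "(norm b)\<^sup>2 \<le> Q * X"
  shows "(norm (a - b))\<^sup>2 \<le> (e / (e - 1) * P + e * Q) * X"
proof -
  have "(norm (a - b))\<^sup>2 \<le> e / (e - 1) * (norm a)\<^sup>2 + e * (norm b)\<^sup>2"
    using norm_add_sq_le[OF e, of a "- b"] by simp
  also have "\<dots> \<le> e / (e - 1) * (P * X) + e * (Q * X)"
    using assms by (intro add_mono mult_left_mono) auto
  finally show ?thesis by (simp add: algebra_simps)
qed

lemma norm_sq_split_bound: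
  fixes a1 a2 b1 b2 :: "'a::real_normed_vector"
  assumes d: "1 < d" and e: "1 < e" and g: "1 < g"
    and "(norm a1)\<^sup>2 \<le> P1 * X" "(norm a2)\<^sup>2 \<le> P2 * X"
    and "(norm b1)\<^sup>2 \<le> Q1 * Y" "(norm b2)\<^sup>2 \<le> Q2 * Y"
  shows "(norm ((a1 - a2) + (b1 - b2)))\<^sup>2
    \<le> d * (e / (e - 1) * P1 + e * P2) * X + d / (d - 1) * (g / (g - 1) * Q1 + g * Q2) * Y"
proof -
  have "(norm ((a1 - a2) + (b1 - b2)))\<^sup>2 \<le> d / (d - 1) * (norm (b1 - b2))\<^sup>2 + d * (norm (a1 - a2))\<^sup>2"
    using norm_add_sq_le[OF d, of "b1 - b2" "a1 - a2"] by (simp add: add.commute)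
  also have "\<dots> \<le> d / (d - 1) * ((g / (g - 1) * Q1 + g * Q2) * Y) + d * ((e / (e - 1) * P1 + e * P2) * X)"
    using norm_diff_sq_le[OF e assms(4,5)] norm_diff_sq_le[OF g assms(6,7)] d
    by (intro add_mono mult_left_mono) auto
  finally show ?thesis by (simp add: algebra_simps)
qed

lemma norm_scaleR_sq_le:
  assumes "(norm x)\<^sup>2 \<le> b * X"
  shows "(norm (c *\<^sub>R x))\<^sup>2 \<le> (c\<^sup>2 * b) * X"
  using assms by (simp add: power_mult_distrib mult.assoc mult_left_mono)

section \<open>The FlexPD-C iteration\<close>

lemma inner_step_iterate:
  "(inner_step \<alpha> A B g l ^^ t) z = matpow (mat 1 - \<alpha> *\<^sub>R B) t *v z
     - \<alpha> *\<^sub>R ((\<Sum>s<t. matpow (mat 1 - \<alpha> *\<^sub>R B) s) *v (g + transpose A *v l))"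
proof (induction t)
  case 0
  then show ?case by simp
next
  case (Suc t)
  define W where "W = mat 1 - \<alpha> *\<^sub>R B"
  define q where "q = g + transpose A *v l"
  have step: "inner_step \<alpha> A B g l y = W *v y - \<alpha> *\<^sub>R q" for y
    by (simp add: inner_step_def W_def q_def matrix_vector_mult_diff_rdistrib
        scaleR_matrix_vector_assoc[symmetric] algebra_simps del: transpose_matrix_vector)
  have sum: "(\<Sum>s<Suc t. matpow W s) = mat 1 + W ** (\<Sum>s<t. matpow W s)"
    by (simp only: sum.lessThan_Suc_shift matpow.simps matrix_mult_sum)
  have "(inner_step \<alpha> A B g l ^^ Suc t) z = W *v ((inner_step \<alpha> A B g l ^^ t) z) - \<alpha> *\<^sub>R q"
    by (simp add: step)
  also have "\<dots> = W *v (matpow W t *v z - \<alpha> *\<^sub>R ((\<Sum>s<t. matpow W s) *v q)) - \<alpha> *\<^sub>R q"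
    by (simp only: Suc.IH W_def q_def)
  also have "\<dots> = matpow W (Suc t) *v z - \<alpha> *\<^sub>R ((\<Sum>s<Suc t. matpow W s) *v q)"
    unfolding sum
    by (simp add: matrix_vector_mult_diff_distrib matrix_vector_mult_scaleR
        matrix_vector_mult_add_rdistrib matrix_vector_mul_assoc algebra_simps
        del: transpose_matrix_vector)
  finally show ?case by (simp only: W_def q_def)
qed

lemma dual_iterate_in_range:
  fixes A :: "real^'n^'m" and lam :: "nat \<Rightarrow> real^'m"
  assumes "lam 0 = 0" and "\<And>j. lam (Suc j) = lam j + \<beta> *\<^sub>R (A *v x (Suc j))"
  shows "\<exists>w. lam j = A *v w"
proof (induction j)
  case 0
  then show ?case using assms(1) by (metis matrix_vector_mult_0_right)
next
  case (Suc j)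
  then obtain w where "lam j = A *v w" by blast
  then have "lam (Suc j) = A *v (w + \<beta> *\<^sub>R x (Suc j))"
    using assms(2) by (simp add: matrix_vector_right_distrib matrix_vector_mult_scaleR)
  then show ?case by blast
qed

lemma incidence_nonzero: "incidence ends \<noteq> 0"
proof
  fix e
  assume "incidence ends = 0"
  then have "incidence ends $ e $ fst (ends e) = 0" by simp
  then show False by (simp add: incidence_def)
qed

locale flexpd_c_matrices =
  fixes B :: "real^'n^'n" and \<alpha> :: real and T :: nat and C M N :: "real^'n^'n"
  assumes B_sym: "transpose B = B" and B_psd: "\<And>v. 0 \<le> v \<bullet> (B *v v)"
    and alpha_pos: "0 < \<alpha>" and alpha_lt: "\<alpha> < 1 / rho B" and T_pos: "1 \<le> T"
    and C_def: "C = (\<Sum>t<T. matpow (mat 1 - \<alpha> *\<^sub>R B) t)"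
    and M_def: "M = matrix_inv C ** matpow (mat 1 - \<alpha> *\<^sub>R B) T"
    and N_def: "N = (1 / \<alpha>) *\<^sub>R (matrix_inv C - M)"
begin

abbreviation W :: "real^'n^'n" where "W \<equiv> mat 1 - \<alpha> *\<^sub>R B"

lemma W_sym: "transpose W = W"
  by (simp add: transpose_diff transpose_scalar B_sym)

lemma W_psd: "0 \<le> v \<bullet> (W *v v)"
proof -
  have "0 < rho B"
    using alpha_pos alpha_lt by (metis divide_le_0_1_iff less_le_not_le not_le order_less_trans)
  then have "\<alpha> * rho B \<le> 1"
    using alpha_lt by (simp add: less_divide_eq)
  then have "\<alpha> * rho B * (v \<bullet> v) \<le> v \<bullet> v"
    using mult_right_mono[of "\<alpha> * rho B" 1 "v \<bullet> v"] by simp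
  moreover have "\<alpha> * (v \<bullet> (B *v v)) \<le> \<alpha> * (rho B * (v \<bullet> v))"
    using alpha_pos inner_le_rho[OF B_sym] by (simp add: mult_left_mono)
  ultimately show ?thesis
    by (simp add: matrix_vector_mult_diff_rdistrib scaleR_matrix_vector_assoc[symmetric]
        inner_diff_right del: transpose_matrix_vector)
qed

lemma C_sym: "transpose C = C"
  by (simp add: C_def transpose_sum transpose_matpow[OF W_sym])

lemma C_pos_def:
  assumes "x \<noteq> 0"
  shows "0 < x \<bullet> (C *v x)"
proof -
  have "0 < x \<bullet> (matpow W 0 *v x)" using assms by simp
  also have "\<dots> \<le> (\<Sum>t<T. x \<bullet> (matpow W t *v x))"
    using T_pos matpow_psd[OF W_sym W_psd] by (intro member_le_sum) auto
  also have "\<dots> = x \<bullet> (C *v x)"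
    by (simp add: C_def sum_matrix_vector_mult inner_sum_right)
  finally show ?thesis .
qed

lemma C_invertible: "invertible C"
  by (rule invertible_if_pos_def[OF C_pos_def])

lemma C_commute: "C ** matpow W T = matpow W T ** C"
  by (simp add: C_def sum_matrix_mult matrix_mult_sum matpow_mult_commute)

lemma M_sym: "transpose M = M"
  by (simp add: M_def matrix_transpose_mul transpose_matpow[OF W_sym]
      transpose_matrix_inv_symmetric[OF C_sym C_invertible]
      matrix_inv_commute[OF C_invertible C_commute])

lemma M_psd: "0 \<le> u \<bullet> (M *v u)"
proof -
  define v where "v = matrix_inv C *v u"
  have u: "u = C *v v"
    by (simp add: v_def matrix_vector_mul_assoc matrix_inv_right[OF C_invertible])
  \<comment> \<open>\<open>u \<bullet> M u = v \<bullet> C W\<^sup>T v\<close>, a sum of the nonnegative forms of the powers \<open>W^(t+T)\<close>.\<close>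
  have "matrix_inv C ** matpow W T ** C = matpow W T"
    by (metis C_commute matrix_inv_left[OF C_invertible] matrix_mul_assoc matrix_mul_lid)
  then have "u \<bullet> (M *v u) = (C *v v) \<bullet> (matpow W T *v v)"
    by (simp add: u M_def matrix_vector_mul_assoc)
  also have "\<dots> = v \<bullet> ((C ** matpow W T) *v v)"
    by (simp add: symmetric_matrix_inner[OF C_sym] matrix_vector_mul_assoc)
  also have "\<dots> = (\<Sum>t<T. v \<bullet> (matpow W (t + T) *v v))"
    by (simp add: C_def sum_matrix_mult sum_matrix_vector_mult inner_sum_right matpow_add)
  also have "\<dots> \<ge> 0"
    by (intro sum_nonneg matpow_psd[OF W_sym W_psd])
  finally show ?thesis .
qed

lemma norm_M_sq_le: "(norm (M *v x))\<^sup>2 \<le> (rho M)\<^sup>2 * (norm x)\<^sup>2"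
  by (rule norm_matrix_vector_sq_le_psd[OF M_sym M_psd])

lemma N_sym: "transpose N = N"
  by (simp add: N_def transpose_scalar transpose_diff M_sym
      transpose_matrix_inv_symmetric[OF C_sym C_invertible])

lemma N_null:
  assumes "B *v z = 0"
  shows "N *v z = 0"
proof -
  have "matpow W T *v z = z"
    using assms by (intro matpow_fixed) (simp add: matrix_vector_mult_diff_rdistrib
        scaleR_matrix_vector_assoc[symmetric] del: transpose_matrix_vector)
  then show ?thesis
    by (simp add: N_def M_def matrix_vector_mult_diff_rdistrib scaleR_matrix_vector_assoc[symmetric]
        matrix_vector_mul_assoc[symmetric] del: transpose_matrix_vector)
qed

lemma inverse_C_outer_step:
  "matrix_inv C *v (inner_step \<alpha> A B g l ^^ T) z = M *v z - \<alpha> *\<^sub>R (g + transpose A *v l)"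
  by (simp add: inner_step_iterate C_def[symmetric] M_def matrix_vector_mult_diff_distrib
      matrix_vector_mult_scaleR matrix_vector_mul_assoc matrix_inv_left[OF C_invertible]
      del: transpose_matrix_vector)

lemma dual_error_identity:
  fixes A :: "real^'n^'e"
  assumes x1: "x1 = (inner_step \<alpha> A B g0 l0 ^^ T) x0"
    and l1: "l1 = l0 + \<beta> *\<^sub>R (A *v x1)"
    and kkt: "gs + transpose A *v ls = 0"
    and xs: "A *v xs = 0" "B *v xs = 0"
  shows "\<alpha> *\<^sub>R (transpose A *v (l1 - ls))
    = (M *v (x0 - x1) - \<alpha> *\<^sub>R (g0 - g1))
      + (\<alpha> *\<^sub>R ((\<beta> *\<^sub>R (transpose A ** A) - N) *v (x1 - xs)) - \<alpha> *\<^sub>R (g1 - gs))"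
proof -
  have outer: "matrix_inv C *v x1 = M *v x0 - \<alpha> *\<^sub>R (g0 + transpose A *v l0)"
    using x1 inverse_C_outer_step by simp
  have "(\<beta> *\<^sub>R (transpose A ** A) - N) *v xs = 0"
    using xs N_null by (simp add: matrix_vector_mult_diff_rdistrib
        scaleR_matrix_vector_assoc[symmetric] matrix_vector_mul_assoc[symmetric]
        del: transpose_matrix_vector)
  then have "\<alpha> *\<^sub>R ((\<beta> *\<^sub>R (transpose A ** A) - N) *v (x1 - xs))
      = (\<alpha> * \<beta>) *\<^sub>R (transpose A *v (A *v x1)) - (matrix_inv C *v x1 - M *v x1)"
    using alpha_pos
    by (simp add: N_def scaleR_diff_right matrix_vector_mult_diff_distrib matrix_vector_mult_diff_rdistrib
        scaleR_matrix_vector_assoc[symmetric] matrix_vector_mul_assoc[symmetric]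
        del: transpose_matrix_vector)
  moreover have "gs = - (transpose A *v ls)"
    using kkt by (simp add: eq_neg_iff_add_eq_0)
  ultimately show ?thesis
    by (simp add: outer l1 matrix_vector_right_distrib matrix_vector_mult_diff_distrib
        matrix_vector_mult_scaleR algebra_simps del: transpose_matrix_vector)
qed

lemma dual_error_estimate:
  fixes A :: "real^'n^'e" and G :: "real^'n \<Rightarrow> real^'n"
  assumes x1: "x1 = (inner_step \<alpha> A B (G x0) l0 ^^ T) x0"
    and l1: "l1 = l0 + \<beta> *\<^sub>R (A *v x1)"
    and kkt: "G xs + transpose A *v ls = 0"
    and xs: "A *v xs = 0" "B *v xs = 0"
    and lip: "\<And>a b. (norm (G a - G b))\<^sup>2 \<le> L\<^sup>2 * (norm (a - b))\<^sup>2"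
    and d: "1 < d" and e: "1 < e" and g: "1 < g"
  shows "(norm (\<alpha> *\<^sub>R (transpose A *v (l1 - ls))))\<^sup>2
    \<le> d * (e / (e - 1) * (rho M)\<^sup>2 + e * (\<alpha>\<^sup>2 * L\<^sup>2)) * (norm (x0 - x1))\<^sup>2
      + d / (d - 1) * (g / (g - 1) * (\<alpha>\<^sup>2 * rho ((\<beta> *\<^sub>R (transpose A ** A) - N) ** (\<beta> *\<^sub>R (transpose A ** A) - N)))
        + g * (\<alpha>\<^sup>2 * L\<^sup>2)) * (norm (x1 - xs))\<^sup>2"
proof -
  have "transpose (\<beta> *\<^sub>R (transpose A ** A) - N) = \<beta> *\<^sub>R (transpose A ** A) - N"
    by (simp add: transpose_diff transpose_scalar matrix_transpose_mul N_sym)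
  from norm_sq_split_bound[OF d e g norm_M_sq_le norm_scaleR_sq_le[OF lip]
      norm_scaleR_sq_le[OF norm_matrix_vector_sq_le[OF this]] norm_scaleR_sq_le[OF lip]]
  show ?thesis
    by (simp only: dual_error_identity[OF x1 l1 kkt xs, of "G x1"])
qed

lemma dual_error_bound:
  fixes A :: "real^'n^'e" and G :: "real^'n \<Rightarrow> real^'n"
  assumes x1: "x1 = (inner_step \<alpha> A B (G x0) l0 ^^ T) x0"
    and l1: "l1 = l0 + \<beta> *\<^sub>R (A *v x1)"
    and kkt: "G xs + transpose A *v ls = 0"
    and xs: "A *v xs = 0" "B *v xs = 0"
    and lip: "\<And>a b. (norm (G a - G b))\<^sup>2 \<le> L\<^sup>2 * (norm (a - b))\<^sup>2"
    and d: "1 < d" and e: "1 < e" and g: "1 < g"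
    and A: "A \<noteq> 0" and range: "l1 - ls = A *v w"
  shows "(norm (l1 - ls))\<^sup>2
    \<le> d / (\<alpha>\<^sup>2 * smin_nz (A ** transpose A))
        * (e / (e - 1) * (rho M)\<^sup>2 + e * \<alpha>\<^sup>2 * L\<^sup>2) * (norm (x0 - x1))\<^sup>2
      + d / ((d - 1) * \<alpha>\<^sup>2 * smin_nz (A ** transpose A))
        * (g / (g - 1) * \<alpha>\<^sup>2 * rho ((\<beta> *\<^sub>R (transpose A ** A) - N) ** (\<beta> *\<^sub>R (transpose A ** A) - N))
           + g * \<alpha>\<^sup>2 * L\<^sup>2) * (norm (x1 - xs))\<^sup>2"
proof -
  define s where "s = smin_nz (A ** transpose A)"
  define R where "R = d * (e / (e - 1) * (rho M)\<^sup>2 + e * (\<alpha>\<^sup>2 * L\<^sup>2)) * (norm (x0 - x1))\<^sup>2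
    + d / (d - 1) * (g / (g - 1) * (\<alpha>\<^sup>2 * rho ((\<beta> *\<^sub>R (transpose A ** A) - N) ** (\<beta> *\<^sub>R (transpose A ** A) - N)))
      + g * (\<alpha>\<^sup>2 * L\<^sup>2)) * (norm (x1 - xs))\<^sup>2"
  have "(\<alpha>\<^sup>2 * s) * (norm (l1 - ls))\<^sup>2 \<le> (norm (\<alpha> *\<^sub>R (transpose A *v (l1 - ls))))\<^sup>2"
    using smin_nz_gram(2)[OF A, of w]
    by (simp add: s_def range power_mult_distrib mult.assoc mult_left_mono)
  also have "\<dots> \<le> R"
    unfolding R_def by (rule dual_error_estimate[OF x1 l1 kkt xs lip d e g])
  finally have "(norm (l1 - ls))\<^sup>2 \<le> R / (\<alpha>\<^sup>2 * s)"
    using smin_nz_gram(1)[OF A] alpha_pos by (simp add: s_def pos_le_divide_eq mult.commute)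
  then show ?thesis by (simp add: R_def s_def add_divide_distrib mult.assoc)
qed

end

theorem lemma3p17:
  fixes ends :: "'e::finite \<Rightarrow> 'n::finite \<times> 'n"
    and A :: "real^'n^'e" and B :: "real^'n^'n"
    and f fd fdd :: "'n \<Rightarrow> real \<Rightarrow> real"
    and m L \<alpha> \<beta> :: real and T :: nat
    and xs :: "real^'n" and ls :: "real^'e"
    and x :: "nat \<Rightarrow> real^'n" and lam :: "nat \<Rightarrow> real^'e"
    and C M N :: "real^'n^'n"
    and dt gt et :: real and k :: nat
  assumes graph: "simple_connected_graph ends"
    and A_def: "A = incidence ends"
    and B_sym: "transpose B = B"
    and B_psd: "\<forall>v. 0 \<le> v \<bullet> (B *v v)"
    and B_null: "\<forall>v. B *v v = 0 \<longleftrightarrow> A *v v = 0"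
    and B_sparse: "\<forall>i j. i \<noteq> j \<and> B $ i $ j \<noteq> 0 \<longrightarrow> adj ends i j"
    and f_d1: "\<forall>i t. (f i has_real_derivative fd i t) (at t)"
    and f_d2: "\<forall>i t. (fd i has_real_derivative fdd i t) (at t)"
    and mpos: "0 < m" and mL: "m \<le> L"
    and fdd_bnd: "\<forall>i t. m \<le> fdd i t \<and> fdd i t \<le> L"
    and xs_feas: "A *v xs = 0"
    and xs_min: "\<forall>y. A *v y = 0 \<longrightarrow> fsum f xs \<le> fsum f y"
    and ls_kkt: "gradf fd xs + transpose A *v ls = 0"
    and ls_range: "\<exists>w. ls = A *v w"
    and beta: "0 < \<beta>" and T: "1 \<le> T"
    and alpha: "0 < \<alpha>" "\<alpha> < 1 / rho B"
    and lam0: "lam 0 = 0"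
    and x_step: "\<forall>j. x (Suc j) = (inner_step \<alpha> A B (gradf fd (x j)) (lam j) ^^ T) (x j)"
    and lam_step: "\<forall>j. lam (Suc j) = lam j + \<beta> *\<^sub>R (A *v x (Suc j))"
    and C_def: "C = (\<Sum>t<T. matpow (mat 1 - \<alpha> *\<^sub>R B) t)"
    and M_def: "M = matrix_inv C ** matpow (mat 1 - \<alpha> *\<^sub>R B) T"
    and N_def: "N = (1 / \<alpha>) *\<^sub>R (matrix_inv C - M)"
    and dt: "1 < dt" and gt: "1 < gt" and et: "1 < et"
  shows "(norm (lam (Suc k) - ls))\<^sup>2
    \<le> dt / (\<alpha>\<^sup>2 * smin_nz (A ** transpose A))
        * (et / (et - 1) * (rho M)\<^sup>2 + et * \<alpha>\<^sup>2 * L\<^sup>2) * (norm (x k - x (Suc k)))\<^sup>2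
      + dt / ((dt - 1) * \<alpha>\<^sup>2 * smin_nz (A ** transpose A))
        * (gt / (gt - 1) * \<alpha>\<^sup>2 * rho ((\<beta> *\<^sub>R (transpose A ** A) - N) ** (\<beta> *\<^sub>R (transpose A ** A) - N))
           + gt * \<alpha>\<^sup>2 * L\<^sup>2) * (norm (x (Suc k) - xs))\<^sup>2"
proof -
  interpret flexpd_c_matrices B \<alpha> T C M N
    using B_sym B_psd alpha T C_def M_def N_def by unfold_locales auto
  have grad: "(norm (gradf fd a - gradf fd b))\<^sup>2 \<le> L\<^sup>2 * (norm (a - b))\<^sup>2" for a b
  proof (rule gradf_lipschitz_sq[OF f_d2[rule_format]])
    show "\<bar>fdd i t\<bar> \<le> L" for i t
      using fdd_bnd[rule_format, of i t] mpos by (simp add: abs_le_iff)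
  qed
  obtain w1 w2 where "lam (Suc k) = A *v w1" "ls = A *v w2"
    using dual_iterate_in_range[of lam \<beta> A x, OF lam0] lam_step ls_range by metis
  then have "lam (Suc k) - ls = A *v (w1 - w2)" by (simp add: matrix_vector_mult_diff_distrib)
  then show ?thesis
    using x_step lam_step ls_kkt xs_feas B_null dt et gt
    by (intro dual_error_bound[where G = "gradf fd", OF _ _ _ _ _ grad])
      (auto simp: A_def incidence_nonzero)
qed

end
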